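(* Let $\Lambda$ be a finite nonempty set and $\mathcal{D}\subseteq\Lambda\times2^\Lambda$. Then: (1) $\mathcal{D}\subseteq\mathcal{D}^\circ\subseteq(\mathcal{D}^\circ)^{\sf ex}\subseteq\overline{\mathcal{D}}$ and ${\sf Base}(\mathcal{D})={\sf Base}(\mathcal{D}^\circ)={\sf Base}((\mathcal{D}^\circ)^{\sf ex})$; (2) $(\mathcal{D}^\circ)^\circ=\mathcal{D}^\circ$, $(\mathcal{D}^{\sf ex})^{\sf ex}=\mathcal{D}^{\sf ex}$ and $(\Lambda^{\sf triv})^{\sf ex}=\Lambda^{\sf triv}$; (3) $(\overline{\mathcal{D}})^{\sf ex}=\overline{\mathcal{D}}$; (4) if $(b,B),(c,C)\in\overline{\mathcal{D}}$ then $(b,B)\circ(c,C)\in\overline{\mathcal{D}}$; in particular $(\overline{\mathcal{D}})^\circ=\overline{\mathcal{D}}$; (5) $\overline{\overline{\mathcal{D}}}=\overline{\mathcal{D}}$; (6) if $\mathcal{D}\subseteq{\sf Div}(U)$ for a set of monomials $U$ indexed by $\Lambda$, then $\overline{\mathcal{D}}\subseteq{\sf Div}(U)$; in particular $\overline{{\sf Div}(U)}={\sf Div}(U)$.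
   Context: For monomials $U=\{u_i:i\in\Lambda\}$ (indexed so that $u_i=u_j$ implies $i=j$), a divisibility relation on $U$ is a pair $(b,B)$, $b\in\Lambda$, $\emptyset\ne B\subseteq\Lambda$, with $u_b\mid\mathrm{lcm}(u_i:i\in B)$; ${\sf Div}(U)$ is the set of these. $(b,B)^{\sf ex}=\{(b,C):B\subseteq C\subseteq\Lambda\}$; $(b,B)\circ(c,C)=(b,(B\smallsetminus\{c\})\cup C)$ (not associative). For $\mathcal{D}\subseteq\Lambda\times2^\Lambda$: $\mathcal{D}^\circ$ is the set of all compositions $(b_1,B_1)\circ\cdots\circ(b_s,B_s)$ with $s\ge1$ and $(b_i,B_i)\in\mathcal{D}$, including all possible bracketings; $\mathcal{D}^{\sf ex}=\bigcup_{(b,B)\in\mathcal{D}}(b,B)^{\sf ex}$; $\Lambda^{\sf triv}=\{(b,B)\in\Lambda\times2^\Lambda:b\in B\}$; $\overline{\mathcal{D}}=(\mathcal{D}^\circ)^{\sf ex}\cup\Lambda^{\sf triv}$; ${\sf Base}(\mathcal{D})=\{b:(b,B)\in\mathcal{D}\text{ for some }B\}$. *)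

theory Defs
  imports Main
begin

definition dcomp :: "'a \<times> 'a set \<Rightarrow> 'a \<times> 'a set \<Rightarrow> 'a \<times> 'a set" where
  "dcomp x y = (fst x, (snd x - {fst y}) \<union> snd y)"

inductive_set dcirc :: "('a \<times> 'a set) set \<Rightarrow> ('a \<times> 'a set) set" for D where
  base: "x \<in> D \<Longrightarrow> x \<in> dcirc D"
| comp: "x \<in> dcirc D \<Longrightarrow> y \<in> dcirc D \<Longrightarrow> dcomp x y \<in> dcirc D"

definition dex :: "'a set \<Rightarrow> ('a \<times> 'a set) set \<Rightarrow> ('a \<times> 'a set) set" where
  "dex L D = {(b, C). \<exists>B. (b, B) \<in> D \<and> B \<subseteq> C \<and> C \<subseteq> L}"

definition dtriv :: "'a set \<Rightarrow> ('a \<times> 'a set) set" where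
  "dtriv L = {(b, B). b \<in> L \<and> B \<subseteq> L \<and> b \<in> B}"

definition dclo :: "'a set \<Rightarrow> ('a \<times> 'a set) set \<Rightarrow> ('a \<times> 'a set) set" where
  "dclo L D = dex L (dcirc D) \<union> dtriv L"

definition dbase :: "('a \<times> 'a set) set \<Rightarrow> 'a set" where
  "dbase D = fst ` D"

text \<open>Monomials in the variables of a finite type 'v are exponent vectors 'v => nat.\<close>
definition mon_dvd :: "('v \<Rightarrow> nat) \<Rightarrow> ('v \<Rightarrow> nat) \<Rightarrow> bool" where
  "mon_dvd m n = (\<forall>v. m v \<le> n v)"

text \<open>lcm of the monomials u i, i in B (B finite nonempty): componentwise maximum of exponents.\<close>
definition mon_lcm :: "('a \<Rightarrow> 'v \<Rightarrow> nat) \<Rightarrow> 'a set \<Rightarrow> ('v \<Rightarrow> nat)" where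
  "mon_lcm u B = (\<lambda>v. Max ((\<lambda>i. u i v) ` B))"

definition Div :: "'a set \<Rightarrow> ('a \<Rightarrow> 'v \<Rightarrow> nat) \<Rightarrow> ('a \<times> 'a set) set" where
  "Div L u = {(b, B). b \<in> L \<and> B \<noteq> {} \<and> B \<subseteq> L \<and> mon_dvd (u b) (mon_lcm u B)}"

end

theory Submission
  imports Defs
begin

text \<open>Everything except closedness of the closure under composition is set bookkeeping. Composing
  (b, B) with (c, C) gives an extension of (b, B) unless c \<in> B and c \<notin> C; in that case
  (c, C) is not trivial, so it extends a composite from D, and the result either extends
  a composite again or is trivial (when b \<noteq> c). Divisibility relations are closed under
  composition because, exponent by exponent, u b is bounded by some u i with i \<in> B, and
  if i = c then by some u j with j \<in> C.\<close>

lemma dcirc_subset: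
  assumes "D \<subseteq> S" and "\<And>x y. x \<in> S \<Longrightarrow> y \<in> S \<Longrightarrow> dcomp x y \<in> S"
  shows "dcirc D \<subseteq> S"
proof
  fix x assume "x \<in> dcirc D"
  then show "x \<in> S"
    by induction (use assms in auto)
qed

lemma subset_dcirc: "D \<subseteq> dcirc D"
  by (auto intro: dcirc.base)

lemma dcirc_idem: "dcirc (dcirc D) = dcirc D"
  by (intro equalityI dcirc_subset subset_dcirc) (auto intro: dcirc.comp)

lemma dcirc_subset_Times: "D \<subseteq> A \<times> Pow B \<Longrightarrow> dcirc D \<subseteq> A \<times> Pow B"
  by (rule dcirc_subset) (auto simp: dcomp_def)

lemma dbase_dcirc: "dbase (dcirc D) = dbase D"
proof -
  have "fst x \<in> fst ` D" if "x \<in> dcirc D" for x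
    using that by induction (auto simp: dcomp_def)
  then show ?thesis
    unfolding dbase_def using subset_dcirc by blast
qed

lemma dex_mono: "X \<subseteq> Y \<Longrightarrow> dex L X \<subseteq> dex L Y"
  unfolding dex_def by blast

lemma subset_dex: "X \<subseteq> UNIV \<times> Pow L \<Longrightarrow> X \<subseteq> dex L X"
  unfolding dex_def by blast

lemma dex_idem: "dex L (dex L X) = dex L X"
  unfolding dex_def by blast

lemma dex_dtriv: "dex L (dtriv L) = dtriv L"
  unfolding dex_def dtriv_def by blast

lemma dex_Un: "dex L (X \<union> Y) = dex L X \<union> dex L Y"
  unfolding dex_def by blast

lemma dbase_dex: "X \<subseteq> UNIV \<times> Pow L \<Longrightarrow> dbase (dex L X) = dbase X"
  unfolding dex_def dbase_def by force

lemma dex_dclo: "dex L (dclo L D) = dclo L D"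
  unfolding dclo_def dex_Un dex_idem dex_dtriv ..

lemma dclo_extend:
  assumes "(b, B) \<in> dclo L D" and "B \<subseteq> C" and "C \<subseteq> L"
  shows "(b, C) \<in> dclo L D"
  using assms by (subst dex_dclo[symmetric]) (auto simp: dex_def)

lemma dclo_snd_subset: "x \<in> dclo L D \<Longrightarrow> snd x \<subseteq> L"
  unfolding dclo_def dex_def dtriv_def by auto

lemma dcomp_mem_dclo:
  assumes x: "(b, B) \<in> dclo L D" and y: "(c, C) \<in> dclo L D"
  shows "dcomp (b, B) (c, C) \<in> dclo L D"
proof -
  have BC_L: "B - {c} \<union> C \<subseteq> L"
    using dclo_snd_subset[OF x] dclo_snd_subset[OF y] by auto
  show ?thesis
  proof (cases "c \<in> B \<and> c \<notin> C")
    case False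
    then have "B \<subseteq> B - {c} \<union> C" by blast
    with x BC_L show ?thesis
      by (simp add: dcomp_def dclo_extend)
  next
    case True
    then have "(c, C) \<notin> dtriv L" by (simp add: dtriv_def)
    with y obtain C0 where C0: "(c, C0) \<in> dcirc D" "C0 \<subseteq> C"
      by (auto simp: dclo_def dex_def)
    from x consider B0 where "(b, B0) \<in> dcirc D" "B0 \<subseteq> B" | "b \<in> B" "b \<in> L"
      by (auto simp: dclo_def dex_def dtriv_def)
    then show ?thesis
    proof cases
      case (1 B0)
      have "(b, B0 - {c} \<union> C0) \<in> dcirc D"
        using dcirc.comp[OF 1(1) C0(1)] by (simp add: dcomp_def)
      moreover have "B0 - {c} \<union> C0 \<subseteq> B - {c} \<union> C"
        using 1(2) C0(2) by blast
      ultimately show ?thesis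
        using BC_L by (auto simp: dcomp_def dclo_def dex_def)
    next
      case 2
      show ?thesis
      proof (cases "b = c")
        case True
        then have "(b, B - {c} \<union> C) \<in> dex L (dcirc D)"
          using C0 BC_L by (auto simp: dex_def)
        then show ?thesis by (simp add: dcomp_def dclo_def)
      next
        case False
        then show ?thesis
          using 2 BC_L by (simp add: dcomp_def dclo_def dtriv_def)
      qed
    qed
  qed
qed

lemma dcirc_dclo: "dcirc (dclo L D) = dclo L D"
  by (intro equalityI dcirc_subset subset_dcirc) (auto intro: dcomp_mem_dclo)

lemma dclo_idem: "dclo L (dclo L D) = dclo L D"
  unfolding dclo_def[of L "dclo L D"] dcirc_dclo dex_dclo by (auto simp: dclo_def)

lemma mon_dvd_mon_lcm_iff:
  assumes "finite B" and "B \<noteq> {}"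
  shows "mon_dvd m (mon_lcm u B) \<longleftrightarrow> (\<forall>v. \<exists>i\<in>B. m v \<le> u i v)"
  using assms by (simp add: mon_dvd_def mon_lcm_def Max_ge_iff)

lemma mem_Div_iff:
  assumes "finite L"
  shows "(b, B) \<in> Div L u \<longleftrightarrow>
    b \<in> L \<and> B \<noteq> {} \<and> B \<subseteq> L \<and> (\<forall>v. \<exists>i\<in>B. u b v \<le> u i v)"
proof -
  have "mon_dvd (u b) (mon_lcm u B) \<longleftrightarrow> (\<forall>v. \<exists>i\<in>B. u b v \<le> u i v)"
    if "B \<noteq> {}" "B \<subseteq> L"
    using that assms by (intro mon_dvd_mon_lcm_iff) (auto intro: finite_subset)
  then show ?thesis
    unfolding Div_def by blast
qed

lemma dtriv_subset_Div: "finite L \<Longrightarrow> dtriv L \<subseteq> Div L u"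
  by (auto simp: dtriv_def mem_Div_iff)

lemma dex_Div: "finite L \<Longrightarrow> dex L (Div L u) \<subseteq> Div L u"
  by (auto simp: dex_def mem_Div_iff) blast

lemma dcomp_mem_Div:
  assumes L: "finite L" and x: "(b, B) \<in> Div L u" and y: "(c, C) \<in> Div L u"
  shows "dcomp (b, B) (c, C) \<in> Div L u"
proof -
  have "\<exists>j\<in>B - {c} \<union> C. u b v \<le> u j v" for v
  proof -
    obtain i where i: "i \<in> B" "u b v \<le> u i v"
      using x by (auto simp: mem_Div_iff[OF L])
    obtain j where j: "j \<in> C" "u c v \<le> u j v"
      using y by (auto simp: mem_Div_iff[OF L])
    show ?thesis
    proof (cases "i = c")
      case True
      with i j show ?thesis by (intro bexI[of _ j]) auto
    next
      case False
      with i show ?thesis by blast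
    qed
  qed
  with x y show ?thesis
    by (auto simp: mem_Div_iff[OF L] dcomp_def)
qed

lemma dclo_subset_Div:
  assumes L: "finite L" and "D \<subseteq> Div L u"
  shows "dclo L D \<subseteq> Div L u"
proof -
  have "dcirc D \<subseteq> Div L u"
    using assms by (intro dcirc_subset) (auto intro: dcomp_mem_Div)
  then have "dex L (dcirc D) \<subseteq> Div L u"
    using dex_mono dex_Div[OF L] by blast
  then show ?thesis
    using dtriv_subset_Div[OF L] by (simp add: dclo_def)
qed

lemma dclo_Div:
  assumes "finite L"
  shows "dclo L (Div L u) = Div L u"
proof
  have "dcirc (Div L u) \<subseteq> L \<times> Pow L"
    by (rule dcirc_subset_Times) (auto simp: Div_def)
  then have "Div L u \<subseteq> dex L (dcirc (Div L u))"
    using subset_dcirc subset_dex by blast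
  then show "Div L u \<subseteq> dclo L (Div L u)"
    by (auto simp: dclo_def)
qed (rule dclo_subset_Div[OF assms order_refl])

theorem proposition2p5:
  fixes L :: "'a set" and D :: "('a \<times> 'a set) set"
  assumes "finite L" and "L \<noteq> {}" and "D \<subseteq> L \<times> Pow L"
  shows
    "(D \<subseteq> dcirc D \<and> dcirc D \<subseteq> dex L (dcirc D) \<and> dex L (dcirc D) \<subseteq> dclo L D
      \<and> dbase D = dbase (dcirc D) \<and> dbase (dcirc D) = dbase (dex L (dcirc D)))
   \<and> (dcirc (dcirc D) = dcirc D \<and> dex L (dex L D) = dex L D \<and> dex L (dtriv L) = dtriv L)
   \<and> dex L (dclo L D) = dclo L D
   \<and> ((\<forall>x\<in>dclo L D. \<forall>y\<in>dclo L D. dcomp x y \<in> dclo L D) \<and> dcirc (dclo L D) = dclo L D)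
   \<and> dclo L (dclo L D) = dclo L D
   \<and> (\<forall>u :: 'a \<Rightarrow> ('v::finite \<Rightarrow> nat). inj_on u L \<longrightarrow>
        (D \<subseteq> Div L u \<longrightarrow> dclo L D \<subseteq> Div L u) \<and> dclo L (Div L u) = Div L u)"
proof -
  have circ_L: "dcirc D \<subseteq> UNIV \<times> Pow L"
    using dcirc_subset_Times[of D L L] assms(3) by blast
  have part1: "D \<subseteq> dcirc D \<and> dcirc D \<subseteq> dex L (dcirc D) \<and> dex L (dcirc D) \<subseteq> dclo L D
      \<and> dbase D = dbase (dcirc D) \<and> dbase (dcirc D) = dbase (dex L (dcirc D))"
    using subset_dcirc subset_dex[OF circ_L]
    by (auto simp: dclo_def dbase_dcirc dbase_dex[OF circ_L])
  have composition_closed: "\<forall>x\<in>dclo L D. \<forall>y\<in>dclo L D. dcomp x y \<in> dclo L D"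
    using dcomp_mem_dclo by fast
  show ?thesis
    by (simp add: part1 composition_closed dcirc_idem dex_idem dex_dtriv dex_dclo dcirc_dclo
      dclo_idem dclo_subset_Div[OF assms(1)] dclo_Div[OF assms(1)])
qed

end
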